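(* Let $B\colon\mathbf{Set}\to\mathbf{Set}$ be a functor, $\Lambda$ a set, $(\tau_\lambda\colon B\mathbb{R}\to\mathbb{R})_{\lambda\in\Lambda}$ arbitrary functions, and $x\colon X\to BX$ a coalgebra. Every entourage of the logical uniformity of $x$ is an entourage of the bisimulation uniformity of $x$. In particular, for every formula $\varphi$, $[\![\varphi]\!]_x\colon X\to\mathbb{R}$ is uniformly continuous with respect to the bisimulation uniformity.
   Context: For a set $Y$ and a family $F$ of functions $Y\to\mathbb{R}$, let $\mathscr{U}(F)$ denote the coarsest uniformity on $Y$ making every $f\in F$ uniformly continuous into $\mathbb{R}$ with the Euclidean uniformity $\mathscr{U}_e$. Formulas: $\varphi::=1\mid\min(\varphi_1,\varphi_2)\mid r+\varphi\mid r\times\varphi\ (r\in\mathbb{R})\mid\heartsuit_\lambda\varphi$; semantics $[\![1]\!]=1$, $\min$ pointwise, $[\![r+\varphi]\!]=r+[\![\varphi]\!]$, $[\![r\times\varphi]\!]=r[\![\varphi]\!]$, $[\![\heartsuit_\lambda\varphi]\!]_x=\tau_\lambda\circ B[\![\varphi]\!]_x\circ x$. The logical uniformity of $x$ is $\mathscr{U}(\{[\![\varphi]\!]_x\mid\varphi\})$. For a uniformity $\mathscr{U}$ on $X$, let $\Phi(\mathscr{U})=\mathscr{U}(\{\tau_\lambda\circ Bh\circ x\mid\lambda\in\Lambda,\ h\colon(X,\mathscr{U})\to(\mathbb{R},\mathscr{U}_e)$ uniformly continuous$\})$. Uniformities on $X$ are ordered by $\mathscr{U}\sqsubseteq\mathscr{V}$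 iff $\mathscr{U}\supseteq\mathscr{V}$ (finer is smaller); the bisimulation uniformity is the $\sqsubseteq$-greatest fixed point of $\Phi$. *)

theory Defs
  imports "HOL-Analysis.Analysis"
begin

definition is_uniformity :: "('a \<times> 'a) set set \<Rightarrow> bool" where
  "is_uniformity U \<longleftrightarrow>
     UNIV \<in> U \<and>
     (\<forall>E\<in>U. Id \<subseteq> E) \<and>
     (\<forall>E\<in>U. \<forall>F. E \<subseteq> F \<longrightarrow> F \<in> U) \<and>
     (\<forall>E\<in>U. \<forall>F\<in>U. E \<inter> F \<in> U) \<and>
     (\<forall>E\<in>U. E\<inverse> \<in> U) \<and>
     (\<forall>E\<in>U. \<exists>D\<in>U. D O D \<subseteq> E)"

definition eucl_unif :: "(real \<times> real) set set" where
  "eucl_unif = {E. eventually (\<lambda>p. p \<in> E) (uniformity :: (real \<times> real) filter)}"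

definition unif_cont :: "('a \<Rightarrow> 'b) \<Rightarrow> ('a \<times> 'a) set set \<Rightarrow> ('b \<times> 'b) set set \<Rightarrow> bool" where
  "unif_cont f U V \<longleftrightarrow> (\<forall>E\<in>V. {(a, b). (f a, f b) \<in> E} \<in> U)"

definition coarsest_unif :: "('a \<Rightarrow> real) set \<Rightarrow> ('a \<times> 'a) set set" where
  "coarsest_unif F = (THE U. is_uniformity U \<and> (\<forall>f\<in>F. unif_cont f U eucl_unif) \<and>
      (\<forall>V. is_uniformity V \<and> (\<forall>f\<in>F. unif_cont f V eucl_unif) \<longrightarrow> U \<subseteq> V))"

text \<open>Formulas; the modality labels range over an index type, restricted to \<Lambda> below.\<close>
datatype 'l form =
    FOne
  | FMin "'l form" "'l form"
  | FPlus real "'l form"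
  | FTimes real "'l form"
  | FHeart 'l "'l form"

text \<open>The functor B enters only through BX = 'bx, BR = 'br and its action
  Bmap h : BX \<rightarrow> BR on maps h : X \<rightarrow> R.\<close>
primrec sem :: "('x \<Rightarrow> 'bx) \<Rightarrow> (('x \<Rightarrow> real) \<Rightarrow> 'bx \<Rightarrow> 'br) \<Rightarrow> ('l \<Rightarrow> 'br \<Rightarrow> real)
                \<Rightarrow> 'l form \<Rightarrow> 'x \<Rightarrow> real" where
  "sem c Bmap \<tau> FOne = (\<lambda>s. 1)"
| "sem c Bmap \<tau> (FMin \<phi> \<psi>) = (\<lambda>s. min (sem c Bmap \<tau> \<phi> s) (sem c Bmap \<tau> \<psi> s))"
| "sem c Bmap \<tau> (FPlus r \<phi>) = (\<lambda>s. r + sem c Bmap \<tau> \<phi> s)"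
| "sem c Bmap \<tau> (FTimes r \<phi>) = (\<lambda>s. r * sem c Bmap \<tau> \<phi> s)"
| "sem c Bmap \<tau> (FHeart l \<phi>) = (\<lambda>s. \<tau> l (Bmap (sem c Bmap \<tau> \<phi>) (c s)))"

definition logical_unif :: "'l set \<Rightarrow> ('x \<Rightarrow> 'bx) \<Rightarrow> (('x \<Rightarrow> real) \<Rightarrow> 'bx \<Rightarrow> 'br)
      \<Rightarrow> ('l \<Rightarrow> 'br \<Rightarrow> real) \<Rightarrow> ('x \<times> 'x) set set" where
  "logical_unif Lam c Bmap \<tau> =
     coarsest_unif {sem c Bmap \<tau> \<phi> | \<phi>. set_form \<phi> \<subseteq> Lam}"

definition Phi :: "'l set \<Rightarrow> ('x \<Rightarrow> 'bx) \<Rightarrow> (('x \<Rightarrow> real) \<Rightarrow> 'bx \<Rightarrow> 'br)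
      \<Rightarrow> ('l \<Rightarrow> 'br \<Rightarrow> real) \<Rightarrow> ('x \<times> 'x) set set \<Rightarrow> ('x \<times> 'x) set set" where
  "Phi Lam c Bmap \<tau> U =
     coarsest_unif {(\<lambda>s. \<tau> l (Bmap h (c s))) | l h. l \<in> Lam \<and> unif_cont h U eucl_unif}"

text \<open>Order: U \<sqsubseteq> V iff U \<supseteq> V. The bisimulation uniformity is the
  \<sqsubseteq>-greatest fixed point of Phi among uniformities.\<close>
definition bisim_unif :: "'l set \<Rightarrow> ('x \<Rightarrow> 'bx) \<Rightarrow> (('x \<Rightarrow> real) \<Rightarrow> 'bx \<Rightarrow> 'br)
      \<Rightarrow> ('l \<Rightarrow> 'br \<Rightarrow> real) \<Rightarrow> ('x \<times> 'x) set set" where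
  "bisim_unif Lam c Bmap \<tau> =
     (THE U. is_uniformity U \<and> Phi Lam c Bmap \<tau> U = U \<and>
        (\<forall>V. is_uniformity V \<and> Phi Lam c Bmap \<tau> V = V \<longrightarrow> V \<supseteq> U))"

end

theory Submission
  imports Defs
begin

text \<open>The coarsest uniformity making a family F of real functions uniformly continuous is
  the initial uniformity, generated by the entourages \<open>|f a - f b| < e\<close> for finitely many
  \<open>f \<in> F\<close>. Hence \<open>\<Phi>\<close> is monotone for inclusion of entourage sets, and by Knaster--Tarski
  the bisimulation uniformity is its least fixed point for inclusion, in particular a
  uniformity U with \<open>\<Phi> U = U\<close>. Induction on formulas shows that every formula is
  uniformly continuous for such a U: the connectives preserve uniform continuity, and the
  modal case is literally a generator of \<open>\<Phi> U\<close>. Being the coarsest uniformity with this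
  property, the logical uniformity is contained in U.\<close>

lemma is_uniformity_superset: "is_uniformity V \<Longrightarrow> E \<in> V \<Longrightarrow> E \<subseteq> F \<Longrightarrow> F \<in> V"
  unfolding is_uniformity_def by blast

lemma is_uniformity_Int: "is_uniformity V \<Longrightarrow> E \<in> V \<Longrightarrow> F \<in> V \<Longrightarrow> E \<inter> F \<in> V"
  unfolding is_uniformity_def by blast

lemma is_uniformity_INT_finite:
  assumes "is_uniformity V" and "finite I" and "\<And>i. i \<in> I \<Longrightarrow> E i \<in> V"
  shows "(\<Inter>i\<in>I. E i) \<in> V"
  using assms(2,3)
proof (induction I rule: finite_induct)
  case empty
  then show ?case using \<open>is_uniformity V\<close> by (simp add: is_uniformity_def)
next
  case (insert i I)
  then show ?case using is_uniformity_Int[OF \<open>is_uniformity V\<close>] by simp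
qed

lemma unif_cont_mono: "U \<subseteq> V \<Longrightarrow> unif_cont f U W \<Longrightarrow> unif_cont f V W"
  unfolding unif_cont_def by blast

definition dist_entourage :: "('a \<Rightarrow> real) \<Rightarrow> real \<Rightarrow> ('a \<times> 'a) set" where
  "dist_entourage f e = {(a, b). dist (f a) (f b) < e}"

lemma unif_cont_eucl_iff:
  assumes "is_uniformity V"
  shows "unif_cont f V eucl_unif \<longleftrightarrow> (\<forall>e>0. dist_entourage f e \<in> V)"
proof
  assume uc: "unif_cont f V eucl_unif"
  show "\<forall>e>0. dist_entourage f e \<in> V"
  proof (intro allI impI)
    fix e :: real assume "e > 0"
    then have "{(x, y). dist x y < e} \<in> eucl_unif"
      by (auto simp: eucl_unif_def eventually_uniformity_metric)
    with uc have "{(a, b). (f a, f b) \<in> {(x, y). dist x y < e}} \<in> V"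
      unfolding unif_cont_def by blast
    then show "dist_entourage f e \<in> V" by (simp add: dist_entourage_def)
  qed
next
  assume ents: "\<forall>e>0. dist_entourage f e \<in> V"
  show "unif_cont f V eucl_unif"
    unfolding unif_cont_def
  proof
    fix E assume "E \<in> eucl_unif"
    then obtain e where "e > 0" and e: "\<And>x y. dist x y < e \<Longrightarrow> (x, y) \<in> E"
      by (auto simp: eucl_unif_def eventually_uniformity_metric)
    have "dist_entourage f e \<subseteq> {(a, b). (f a, f b) \<in> E}"
      using e by (auto simp: dist_entourage_def)
    with ents \<open>e > 0\<close> show "{(a, b). (f a, f b) \<in> E} \<in> V"
      using is_uniformity_superset[OF assms] by blast
  qed
qed

lemma unif_cont_const:
  assumes "is_uniformity V"
  shows "unif_cont (\<lambda>_. k) V eucl_unif"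
  using assms by (simp add: unif_cont_eucl_iff dist_entourage_def is_uniformity_def)

lemma unif_cont_Lipschitz:
  assumes V: "is_uniformity V" and f: "unif_cont f V eucl_unif"
    and Lipschitz: "\<And>a b. dist (g a) (g b) \<le> K * dist (f a) (f b)"
  shows "unif_cont g V eucl_unif"
  unfolding unif_cont_eucl_iff[OF V]
proof (intro allI impI)
  fix e :: real assume "e > 0"
  define d where "d = e / (\<bar>K\<bar> + 1)"
  have "d > 0" using \<open>e > 0\<close> by (simp add: d_def)
  have "dist_entourage f d \<subseteq> dist_entourage g e"
  proof clarify
    fix a b assume "(a, b) \<in> dist_entourage f d"
    then have "dist (f a) (f b) < d" by (simp add: dist_entourage_def)
    have "dist (g a) (g b) \<le> K * dist (f a) (f b)" by (rule Lipschitz)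
    also have "\<dots> \<le> (\<bar>K\<bar> + 1) * dist (f a) (f b)"
      by (intro mult_right_mono) auto
    also have "\<dots> < (\<bar>K\<bar> + 1) * d"
      using \<open>dist (f a) (f b) < d\<close> by (intro mult_strict_left_mono) auto
    also have "\<dots> = e" by (simp add: d_def)
    finally show "(a, b) \<in> dist_entourage g e" by (simp add: dist_entourage_def)
  qed
  moreover have "dist_entourage f d \<in> V"
    using f \<open>d > 0\<close> unfolding unif_cont_eucl_iff[OF V] by blast
  ultimately show "dist_entourage g e \<in> V"
    by (rule is_uniformity_superset[OF V, rotated])
qed

lemma unif_cont_min:
  assumes V: "is_uniformity V"
    and "unif_cont f V eucl_unif" and "unif_cont g V eucl_unif"
  shows "unif_cont (\<lambda>s. min (f s) (g s)) V eucl_unif"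
  unfolding unif_cont_eucl_iff[OF V]
proof (intro allI impI)
  fix e :: real assume "e > 0"
  have "dist_entourage f e \<inter> dist_entourage g e \<in> V"
    using assms \<open>e > 0\<close> by (simp add: unif_cont_eucl_iff is_uniformity_Int)
  moreover have "dist_entourage f e \<inter> dist_entourage g e
      \<subseteq> dist_entourage (\<lambda>s. min (f s) (g s)) e"
    by (auto simp: dist_entourage_def dist_real_def min_def)
  ultimately show "dist_entourage (\<lambda>s. min (f s) (g s)) e \<in> V"
    by (rule is_uniformity_superset[OF V])
qed

definition initial_unif :: "('a \<Rightarrow> real) set \<Rightarrow> ('a \<times> 'a) set set" where
  "initial_unif F =
     {E. \<exists>G e. finite G \<and> G \<subseteq> F \<and> 0 < e \<and> (\<Inter>f\<in>G. dist_entourage f e) \<subseteq> E}"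

lemma initial_unifI:
  "finite G \<Longrightarrow> G \<subseteq> F \<Longrightarrow> 0 < e \<Longrightarrow> (\<Inter>f\<in>G. dist_entourage f e) \<subseteq> E
    \<Longrightarrow> E \<in> initial_unif F"
  unfolding initial_unif_def by blast

lemma initial_unifE:
  assumes "E \<in> initial_unif F"
  obtains G e where "finite G" "G \<subseteq> F" "0 < e" "(\<Inter>f\<in>G. dist_entourage f e) \<subseteq> E"
  using assms unfolding initial_unif_def by blast

lemma initial_unif_mono: "F \<subseteq> F' \<Longrightarrow> initial_unif F \<subseteq> initial_unif F'"
  unfolding initial_unif_def by blast

lemma is_uniformity_initial_unif: "is_uniformity (initial_unif F)"
  unfolding is_uniformity_def
proof (intro conjI ballI allI impI)
  show "UNIV \<in> initial_unif F"
    by (rule initial_unifI[of "{}" _ 1]) auto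
next
  fix E assume "E \<in> initial_unif F"
  then obtain G e where "0 < e" "(\<Inter>f\<in>G. dist_entourage f e) \<subseteq> E"
    by (rule initial_unifE)
  then show "Id \<subseteq> E" by (auto simp: dist_entourage_def)
next
  fix E E' assume "E \<in> initial_unif F" "E \<subseteq> E'"
  then show "E' \<in> initial_unif F" unfolding initial_unif_def by blast
next
  fix E E' assume "E \<in> initial_unif F" "E' \<in> initial_unif F"
  then obtain G e G' e' where
    "finite G" "G \<subseteq> F" "0 < e" "(\<Inter>f\<in>G. dist_entourage f e) \<subseteq> E"
    "finite G'" "G' \<subseteq> F" "0 < e'" "(\<Inter>f\<in>G'. dist_entourage f e') \<subseteq> E'"
    by (metis initial_unifE)
  then show "E \<inter> E' \<in> initial_unif F"
    by (intro initial_unifI[of "G \<union> G'" _ "min e e'"]) (auto simp: dist_entourage_def)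
next
  fix E assume "E \<in> initial_unif F"
  then obtain G e where G: "finite G" "G \<subseteq> F" "0 < e" "(\<Inter>f\<in>G. dist_entourage f e) \<subseteq> E"
    by (rule initial_unifE)
  have "(\<Inter>f\<in>G. dist_entourage f e) \<subseteq> E\<inverse>"
    using G(4) by (auto simp: dist_entourage_def dist_commute)
  with G(1-3) show "E\<inverse> \<in> initial_unif F" by (rule initial_unifI)
next
  fix E assume "E \<in> initial_unif F"
  then obtain G e where "finite G" "G \<subseteq> F" "0 < e" and G: "(\<Inter>f\<in>G. dist_entourage f e) \<subseteq> E"
    by (rule initial_unifE)
  define D where "D = (\<Inter>f\<in>G. dist_entourage f (e / 2))"
  have "D \<in> initial_unif F"
    using \<open>finite G\<close> \<open>G \<subseteq> F\<close> \<open>0 < e\<close> unfolding D_def by (intro initial_unifI[where e = "e / 2"]) auto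
  moreover have "D O D \<subseteq> E"
  proof clarify
    fix a b d assume ab: "(a, b) \<in> D" and bd: "(b, d) \<in> D"
    have "dist (f a) (f d) < e" if "f \<in> G" for f
      using ab bd that dist_triangle[of "f a" "f d" "f b"]
      by (fastforce simp: D_def dist_entourage_def)
    then show "(a, d) \<in> E" using G by (auto simp: dist_entourage_def)
  qed
  ultimately show "\<exists>D\<in>initial_unif F. D O D \<subseteq> E" by blast
qed

lemma unif_cont_initial_unif: "f \<in> F \<Longrightarrow> unif_cont f (initial_unif F) eucl_unif"
  unfolding unif_cont_eucl_iff[OF is_uniformity_initial_unif]
  by (auto intro: initial_unifI[of "{f}"])

lemma initial_unif_least:
  assumes V: "is_uniformity V" and F: "\<And>f. f \<in> F \<Longrightarrow> unif_cont f V eucl_unif"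
  shows "initial_unif F \<subseteq> V"
proof
  fix E assume "E \<in> initial_unif F"
  then obtain G e where "finite G" "G \<subseteq> F" "0 < e" "(\<Inter>f\<in>G. dist_entourage f e) \<subseteq> E"
    by (rule initial_unifE)
  moreover have "(\<Inter>f\<in>G. dist_entourage f e) \<in> V"
    using \<open>finite G\<close> \<open>G \<subseteq> F\<close> \<open>0 < e\<close> F
    by (intro is_uniformity_INT_finite[OF V]) (auto simp: unif_cont_eucl_iff[OF V])
  ultimately show "E \<in> V" using is_uniformity_superset[OF V] by blast
qed

lemma coarsest_unif_eq_initial_unif: "coarsest_unif F = initial_unif F"
  unfolding coarsest_unif_def
proof (rule the_equality)
  show "is_uniformity (initial_unif F) \<and> (\<forall>f\<in>F. unif_cont f (initial_unif F) eucl_unif) \<and>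
      (\<forall>V. is_uniformity V \<and> (\<forall>f\<in>F. unif_cont f V eucl_unif) \<longrightarrow> initial_unif F \<subseteq> V)"
    by (simp add: is_uniformity_initial_unif unif_cont_initial_unif initial_unif_least)
next
  fix U assume "is_uniformity U \<and> (\<forall>f\<in>F. unif_cont f U eucl_unif) \<and>
      (\<forall>V. is_uniformity V \<and> (\<forall>f\<in>F. unif_cont f V eucl_unif) \<longrightarrow> U \<subseteq> V)"
  then show "U = initial_unif F"
    by (meson initial_unif_least is_uniformity_initial_unif subset_antisym unif_cont_initial_unif)
qed

lemma Phi_eq_initial_unif:
  "Phi Lam c Bmap \<tau> U =
     initial_unif {(\<lambda>s. \<tau> l (Bmap h (c s))) | l h. l \<in> Lam \<and> unif_cont h U eucl_unif}"
  unfolding Phi_def coarsest_unif_eq_initial_unif ..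

lemma is_uniformity_Phi: "is_uniformity (Phi Lam c Bmap \<tau> U)"
  unfolding Phi_eq_initial_unif by (rule is_uniformity_initial_unif)

lemma mono_Phi: "mono (Phi Lam c Bmap \<tau>)"
  by (rule monoI, unfold Phi_eq_initial_unif, rule initial_unif_mono) (blast intro: unif_cont_mono)

lemma unif_cont_Phi:
  "l \<in> Lam \<Longrightarrow> unif_cont h U eucl_unif
    \<Longrightarrow> unif_cont (\<lambda>s. \<tau> l (Bmap h (c s))) (Phi Lam c Bmap \<tau> U) eucl_unif"
  unfolding Phi_eq_initial_unif by (rule unif_cont_initial_unif) blast

lemma The_least_fixpoint_eq_lfp:
  fixes f :: "'a::complete_lattice \<Rightarrow> 'a"
  assumes "mono f" and "P (lfp f)"
  shows "(THE u. P u \<and> f u = u \<and> (\<forall>v. P v \<and> f v = v \<longrightarrow> u \<le> v)) = lfp f"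
proof (rule the_equality)
  show "P (lfp f) \<and> f (lfp f) = lfp f \<and> (\<forall>v. P v \<and> f v = v \<longrightarrow> lfp f \<le> v)"
    using assms by (simp add: lfp_fixpoint lfp_lowerbound)
next
  fix u assume "P u \<and> f u = u \<and> (\<forall>v. P v \<and> f v = v \<longrightarrow> u \<le> v)"
  then show "u = lfp f"
    using assms by (metis antisym lfp_fixpoint lfp_lowerbound order_refl)
qed

lemma bisim_unif_eq_lfp: "bisim_unif Lam c Bmap \<tau> = lfp (Phi Lam c Bmap \<tau>)"
proof -
  have "is_uniformity (lfp (Phi Lam c Bmap \<tau>))"
    by (subst lfp_unfold[OF mono_Phi]) (rule is_uniformity_Phi)
  then show ?thesis
    unfolding bisim_unif_def by (rule The_least_fixpoint_eq_lfp[OF mono_Phi])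
qed

lemma unif_cont_sem:
  assumes U: "is_uniformity U" and post_fixpoint: "Phi Lam c Bmap \<tau> U \<subseteq> U"
    and "set_form \<phi> \<subseteq> Lam"
  shows "unif_cont (sem c Bmap \<tau> \<phi>) U eucl_unif"
  using assms(3)
proof (induction \<phi>)
  case FOne
  show ?case by (simp add: unif_cont_const[OF U])
next
  case (FMin \<phi> \<psi>)
  then show ?case by (simp add: unif_cont_min[OF U])
next
  case (FPlus r \<phi>)
  then show ?case by (auto intro: unif_cont_Lipschitz[OF U, where K = 1] simp: dist_real_def)
next
  case (FTimes r \<phi>)
  then show ?case
    by (auto intro: unif_cont_Lipschitz[OF U, where K = "\<bar>r\<bar>"]
        simp: dist_real_def abs_mult right_diff_distrib[symmetric])
next
  case (FHeart l \<phi>)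
  then show ?case by (auto intro: unif_cont_mono[OF post_fixpoint] unif_cont_Phi)
qed

theorem mainTheorem11:
  fixes Lam :: "'l set"
    and \<tau> :: "'l \<Rightarrow> 'br \<Rightarrow> real"
    and Bmap :: "('x \<Rightarrow> real) \<Rightarrow> 'bx \<Rightarrow> 'br"
    and c :: "'x \<Rightarrow> 'bx"
  shows "logical_unif Lam c Bmap \<tau> \<subseteq> bisim_unif Lam c Bmap \<tau> \<and>
         (\<forall>\<phi>. set_form \<phi> \<subseteq> Lam \<longrightarrow>
            unif_cont (sem c Bmap \<tau> \<phi>) (bisim_unif Lam c Bmap \<tau>) eucl_unif)"
proof -
  let ?U = "bisim_unif Lam c Bmap \<tau>"
  have fixpoint: "Phi Lam c Bmap \<tau> ?U = ?U"
    unfolding bisim_unif_eq_lfp by (rule lfp_fixpoint[OF mono_Phi])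
  have uniformity: "is_uniformity ?U"
    by (subst fixpoint[symmetric]) (rule is_uniformity_Phi)
  have sem: "\<forall>\<phi>. set_form \<phi> \<subseteq> Lam \<longrightarrow> unif_cont (sem c Bmap \<tau> \<phi>) ?U eucl_unif"
    using unif_cont_sem[OF uniformity] fixpoint by blast
  then have "logical_unif Lam c Bmap \<tau> \<subseteq> ?U"
    unfolding logical_unif_def coarsest_unif_eq_initial_unif
    by (intro initial_unif_least[OF uniformity]) blast
  with sem show ?thesis by blast
qed

end
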